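(* Let $r\in\mathbb C$ be transcendental over $\mathbb Q$. Let $\Psi_r:\mathsf{PGL}_2(\mathbb Z)\to\mathsf{PGL}_2(\mathbb C)$ (resp. $\Psi^\pm_r$) be the homomorphism obtained from $\Psi$ (resp. $\Psi^\pm$) by substituting $q=r$ in the matrices (after clearing denominators, so that entries are polynomials in $q$ with coefficients in $\mathbb Z[\omega]$). Then $\Psi_r$ and $\Psi^\pm_r$ are injective; i.e. the specialization maps $\Psi(\mathsf{PGL}_2(\mathbb Z))\to\Psi_r(\mathsf{PGL}_2(\mathbb Z))$ and $\Psi^\pm(\mathsf{PGL}_2(\mathbb Z))\to\Psi^\pm_r(\mathsf{PGL}_2(\mathbb Z))$ are isomorphisms.
   Context: $\omega=e^{2\pi i/6}$. An invertible matrix $\begin{bmatrix}a&b\\c&d\end{bmatrix}$ denotes the Möbius map $x\mapsto(ax+b)/(cx+d)$. $\Psi,\Psi^\pm:\mathsf{PGL}_2(\mathbb Z)\to\mathsf{PGL}_2(\mathbb C(q))$ are the homomorphisms defined on the generators $T(x)=1+x$, $S(x)=-1/x$, $V(x)=-x$ by $\Psi(T)=\Psi^\pm(T)=\begin{bmatrix}q&1\\0&1\end{bmatrix}$, $\Psi(S)=\begin{bmatrix}0&-1\\ q&0\end{bmatrix}$, $\Psi(V)=\begin{bmatrix}q&1-q\\ q-q^2&-q\end{bmatrix}$, $\Psi^{\pm}(S)=\begin{bmatrix}1&q^{-1}\\ -q+\omega^{\pm1}&-1\end{bmatrix}$, $\Psi^{\pm}(V)=\begin{bmatrix}1&\frac{1+q^{-1}}{q-\omega^{\pm1}}\\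 1-q&-1\end{bmatrix}$. *)

theory Defs
  imports "HOL-Analysis.Analysis" "HOL-Computational_Algebra.Polynomial"
begin

definition mat2 :: "'a \<Rightarrow> 'a \<Rightarrow> 'a \<Rightarrow> 'a \<Rightarrow> 'a^2^2" where
  "mat2 a b c d = (\<chi> i j. if i = 1 then (if j = 1 then a else b) else (if j = 1 then c else d))"

text \<open>Generators T(x)=1+x, S(x)=-1/x, V(x)=-x of PGL_2(Z); a letter is a generator
  together with a flag saying whether it is the generator (True) or its inverse (False).\<close>
datatype gen = GT | GS | GV

type_synonym word = "(gen \<times> bool) list"

definition omega :: complex where "omega = cis (pi / 3)"

fun genZ :: "gen \<times> bool \<Rightarrow> int^2^2" where
  "genZ (GT, True) = mat2 1 1 0 1"
| "genZ (GT, False) = mat2 1 (-1) 0 1"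
| "genZ (GS, True) = mat2 0 (-1) 1 0"
| "genZ (GS, False) = mat2 0 1 (-1) 0"
| "genZ (GV, _) = mat2 (-1) 0 0 1"

definition evalZ :: "word \<Rightarrow> int^2^2" where
  "evalZ w = foldr (\<lambda>l M. genZ l ** M) w (mat 1)"

definition pglZ_eq :: "int^2^2 \<Rightarrow> int^2^2 \<Rightarrow> bool" where
  "pglZ_eq A B \<longleftrightarrow> A = B \<or> A = - B"

datatype rep = Psi | PsiPlus | PsiMinus

text \<open>Specialised images of the generators at q, with denominators cleared
  (Psi^{pm}(S) multiplied by q, Psi^{pm}(V) multiplied by q(q - omega^{pm1})).\<close>
fun genC :: "rep \<Rightarrow> complex \<Rightarrow> gen \<Rightarrow> complex^2^2" where
  "genC _ q GT = mat2 q 1 0 1"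
| "genC Psi q GS = mat2 0 (-1) q 0"
| "genC Psi q GV = mat2 q (1 - q) (q - q^2) (-q)"
| "genC PsiPlus q GS = mat2 q 1 (q * (omega - q)) (-q)"
| "genC PsiMinus q GS = mat2 q 1 (q * (inverse omega - q)) (-q)"
| "genC PsiPlus q GV = mat2 (q * (q - omega)) (q + 1) ((1 - q) * q * (q - omega)) (- q * (q - omega))"
| "genC PsiMinus q GV = mat2 (q * (q - inverse omega)) (q + 1) ((1 - q) * q * (q - inverse omega)) (- q * (q - inverse omega))"

text \<open>Adjugate: projectively the inverse of an invertible 2x2 matrix.\<close>
definition adj2 :: "complex^2^2 \<Rightarrow> complex^2^2" where
  "adj2 M = mat2 (M$2$2) (- M$1$2) (- M$2$1) (M$1$1)"

fun letterC :: "rep \<Rightarrow> complex \<Rightarrow> gen \<times> bool \<Rightarrow> complex^2^2" where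
  "letterC \<psi> q (g, True) = genC \<psi> q g"
| "letterC \<psi> q (g, False) = adj2 (genC \<psi> q g)"

definition evalC :: "rep \<Rightarrow> complex \<Rightarrow> word \<Rightarrow> complex^2^2" where
  "evalC \<psi> q w = foldr (\<lambda>l M. letterC \<psi> q l ** M) w (mat 1)"

definition pglC_eq :: "complex^2^2 \<Rightarrow> complex^2^2 \<Rightarrow> bool" where
  "pglC_eq A B \<longleftrightarrow> (\<exists>c. c \<noteq> 0 \<and> A = (\<chi> i j. c * B$i$j))"

end

theory Submission
  imports Defs
begin

(* Every entry of a word's image under Psi or Psi^pm is a polynomial in q with coefficients
   in Z[omega]. If two images agree projectively at a transcendental q = r, all 2x2 minors
   A_ij B_kl - A_kl B_ij vanish at r, hence identically (a nonzero Z[omega]-polynomial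
   a + omega b would make r a root of the integer polynomial a^2 + ab + b^2). So the images
   also agree projectively at q = 1, where each representation is conjugate, by a translation
   x |-> x + t, to the standard action of PGL_2(Z); there projective equality of integer
   matrices of determinant +-1 means equality up to sign. *)

lemma mat2_nth [simp]:
  "mat2 a b c d $ 1 $ 1 = a" "mat2 a b c d $ 1 $ 2 = b"
  "mat2 a b c d $ 2 $ 1 = c" "mat2 a b c d $ 2 $ 2 = d"
  by (simp_all add: mat2_def)

lemma mat2_mult:
  "(mat2 a b c d :: 'a::semiring_1^2^2) ** mat2 a' b' c' d'
     = mat2 (a*a' + b*c') (a*b' + b*d') (c*a' + d*c') (c*b' + d*d')"
  unfolding mat2_def by (simp add: vec_eq_iff forall_2 matrix_matrix_mult_def sum_2)

lemma mat_1_eq_mat2: "(mat 1 :: 'a::zero_neq_one^2^2) = mat2 1 0 0 1"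
  unfolding mat2_def by (simp add: vec_eq_iff forall_2 mat_def)

lemma omega_squared: "omega * omega = omega - 1"
proof -
  have omega: "omega = Complex (1/2) (sqrt 3 / 2)"
    by (simp add: omega_def cis.ctr cos_60 sin_60)
  show ?thesis
    unfolding omega by (simp add: complex_eq_iff power2_eq_square)
qed

lemma inverse_omega: "inverse omega = 1 - omega"
  using omega_squared by (intro inverse_unique) (simp add: algebra_simps)

lemma omega_neq_0: "omega \<noteq> 0" and omega_neq_1: "omega \<noteq> 1"
  using omega_squared by auto

lemma sq_plus_mult_plus_sq_eq_0_iff:
  "(x::'a::linordered_idom)^2 + x*y + y^2 = 0 \<longleftrightarrow> x = 0 \<and> y = 0"
proof
  assume "x^2 + x*y + y^2 = 0"
  moreover have "(2*x + y)^2 + 3 * y^2 = 4 * (x^2 + x*y + y^2)"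
    by (simp add: power2_eq_square algebra_simps)
  ultimately have "(2*x + y)^2 + 3 * y^2 = 0"
    by simp
  then have "y = 0" "2*x + y = 0"
    by (simp_all add: add_nonneg_eq_0_iff)
  then show "x = 0 \<and> y = 0"
    by simp
qed simp

definition int_coeffs :: "complex poly \<Rightarrow> bool" where
  "int_coeffs p \<longleftrightarrow> (\<forall>i. coeff p i \<in> \<int>)"

lemma int_coeffs_const: "x \<in> \<int> \<Longrightarrow> int_coeffs [:x:]"
  by (simp add: int_coeffs_def coeff_pCons split: nat.split)

lemma int_coeffs_X: "int_coeffs [:0, 1:]"
  by (simp add: int_coeffs_def coeff_pCons split: nat.split)

lemma int_coeffs_add: "int_coeffs p \<Longrightarrow> int_coeffs q \<Longrightarrow> int_coeffs (p + q)"
  by (simp add: int_coeffs_def)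

lemma int_coeffs_minus: "int_coeffs p \<Longrightarrow> int_coeffs (- p)"
  by (simp add: int_coeffs_def)

lemma int_coeffs_diff: "int_coeffs p \<Longrightarrow> int_coeffs q \<Longrightarrow> int_coeffs (p - q)"
  by (simp add: int_coeffs_def)

lemma int_coeffs_mult: "int_coeffs p \<Longrightarrow> int_coeffs q \<Longrightarrow> int_coeffs (p * q)"
  unfolding int_coeffs_def coeff_mult by (intro allI Ints_sum Ints_mult) auto

lemma poly_in_Ints: "int_coeffs p \<Longrightarrow> x \<in> \<int> \<Longrightarrow> poly p x \<in> \<int>"
  unfolding int_coeffs_def poly_altdef by (intro Ints_sum Ints_mult Ints_power) auto

lemma int_coeffs_transcendental_root:
  assumes "\<not> algebraic r" "int_coeffs p" "poly p r = 0"
  shows "p = 0"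
  using assms algebraicI[of p r] unfolding int_coeffs_def by blast

lemma int_coeffs_vanishing_on_Nats:
  assumes "int_coeffs p" "\<And>n. poly p (of_nat n) = 0"
  shows "p = 0"
proof (rule ccontr)
  assume "p \<noteq> 0"
  then have "finite {x. poly p x = 0}"
    by (rule poly_roots_finite)
  moreover have "range (of_nat :: nat \<Rightarrow> complex) \<subseteq> {x. poly p x = 0}"
    using assms(2) by auto
  ultimately show False
    using range_inj_infinite[OF inj_of_nat] finite_subset by blast
qed

definition eisenstein_polyfun :: "(complex \<Rightarrow> complex) \<Rightarrow> bool" where
  "eisenstein_polyfun f \<longleftrightarrow>
     (\<exists>a b. int_coeffs a \<and> int_coeffs b \<and> (\<forall>q. f q = poly a q + omega * poly b q))"

lemma eisenstein_polyfun_const: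
  assumes "x \<in> \<int>" "y \<in> \<int>"
  shows "eisenstein_polyfun (\<lambda>q. x + omega * y)"
  unfolding eisenstein_polyfun_def
  by (intro exI[of _ "[:x:]"] exI[of _ "[:y:]"]) (simp add: assms int_coeffs_const)

lemma eisenstein_polyfun_0: "eisenstein_polyfun (\<lambda>q. 0)"
  using eisenstein_polyfun_const[of 0 0] by simp

lemma eisenstein_polyfun_1: "eisenstein_polyfun (\<lambda>q. 1)"
  using eisenstein_polyfun_const[of 1 0] by simp

lemma eisenstein_polyfun_omega: "eisenstein_polyfun (\<lambda>q. omega)"
  using eisenstein_polyfun_const[of 0 1] by simp

lemma eisenstein_polyfun_id: "eisenstein_polyfun (\<lambda>q. q)"
  unfolding eisenstein_polyfun_def
  by (rule exI[of _ "[:0, 1:]"], rule exI[of _ 0])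
    (simp add: int_coeffs_X int_coeffs_const[of 0, simplified])

lemma eisenstein_polyfun_add:
  assumes "eisenstein_polyfun f" "eisenstein_polyfun g"
  shows "eisenstein_polyfun (\<lambda>q. f q + g q)"
proof -
  obtain a b c d where "int_coeffs a" "int_coeffs b" "int_coeffs c" "int_coeffs d"
    "\<And>q. f q = poly a q + omega * poly b q" "\<And>q. g q = poly c q + omega * poly d q"
    using assms unfolding eisenstein_polyfun_def by metis
  then show ?thesis
    unfolding eisenstein_polyfun_def
    by (intro exI[of _ "a + c"] exI[of _ "b + d"]) (simp add: int_coeffs_add algebra_simps)
qed

lemma eisenstein_polyfun_uminus:
  assumes "eisenstein_polyfun f"
  shows "eisenstein_polyfun (\<lambda>q. - f q)"
proof -
  obtain a b where "int_coeffs a" "int_coeffs b" "\<And>q. f q = poly a q + omega * poly b q"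
    using assms unfolding eisenstein_polyfun_def by metis
  then show ?thesis
    unfolding eisenstein_polyfun_def
    by (intro exI[of _ "- a"] exI[of _ "- b"]) (simp add: int_coeffs_minus algebra_simps)
qed

lemma eisenstein_polyfun_diff:
  "eisenstein_polyfun f \<Longrightarrow> eisenstein_polyfun g \<Longrightarrow> eisenstein_polyfun (\<lambda>q. f q - g q)"
  using eisenstein_polyfun_add[of f "\<lambda>q. - g q"] eisenstein_polyfun_uminus[of g] by simp

lemma eisenstein_polyfun_mult:
  assumes "eisenstein_polyfun f" "eisenstein_polyfun g"
  shows "eisenstein_polyfun (\<lambda>q. f q * g q)"
proof -
  obtain a b c d where "int_coeffs a" "int_coeffs b" "int_coeffs c" "int_coeffs d"
    "\<And>q. f q = poly a q + omega * poly b q" "\<And>q. g q = poly c q + omega * poly d q"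
    using assms unfolding eisenstein_polyfun_def by metis
  moreover have "(x + omega * y) * (z + omega * w) = (x*z - y*w) + omega * (x*w + y*z + y*w)"
    for x y z w :: complex
  proof -
    have "(x + omega * y) * (z + omega * w) = x*z + omega * (x*w + y*z) + (omega * omega) * (y*w)"
      by (simp add: algebra_simps)
    then show ?thesis
      by (simp add: omega_squared algebra_simps)
  qed
  ultimately show ?thesis
    unfolding eisenstein_polyfun_def
    by (intro exI[of _ "a * c - b * d"] exI[of _ "a * d + b * c + b * d"])
       (simp add: int_coeffs_add int_coeffs_mult int_coeffs_diff)
qed

lemmas eisenstein_polyfun_intros =
  eisenstein_polyfun_0 eisenstein_polyfun_1 eisenstein_polyfun_omega eisenstein_polyfun_id eisenstein_polyfun_add eisenstein_polyfun_uminus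
  eisenstein_polyfun_diff eisenstein_polyfun_mult

lemma eisenstein_polyfun_transcendental_root:
  assumes "\<not> algebraic r" "eisenstein_polyfun f" "f r = 0"
  shows "f q = 0"
proof -
  obtain a b where ab: "int_coeffs a" "int_coeffs b" "\<And>q. f q = poly a q + omega * poly b q"
    using assms(2) unfolding eisenstein_polyfun_def by metis
  define N where "N = a*a + a*b + b*b"
  \<comment> \<open>the norm from \<open>\<int>[\<omega>]\<close> to \<open>\<int>\<close>, since \<open>\<omega>\<^sup>2 - \<omega> + 1 = 0\<close>\<close>
  have "poly a r = - omega * poly b r"
    using assms(3) ab(3)[of r] by (simp add: eq_neg_iff_add_eq_0)
  then have "poly N r = (poly b r)^2 * (omega * omega - omega + 1)"
    by (simp add: N_def algebra_simps power2_eq_square)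
  then have "N = 0"
    using assms(1) ab by (intro int_coeffs_transcendental_root)
      (simp_all add: omega_squared N_def int_coeffs_add int_coeffs_mult)
  have "poly a (of_nat n) = 0 \<and> poly b (of_nat n) = 0" for n
  proof -
    obtain x y where "poly a (of_nat n) = of_int x" "poly b (of_nat n) = of_int y"
      using poly_in_Ints[OF ab(1) Ints_of_nat] poly_in_Ints[OF ab(2) Ints_of_nat]
      by (metis Ints_cases)
    moreover have "poly N (of_nat n) = 0"
      using \<open>N = 0\<close> by simp
    ultimately have "of_int (x^2 + x*y + y^2) = (0::complex)"
      by (simp add: N_def power2_eq_square)
    then have "x = 0 \<and> y = 0"
      by (simp only: of_int_eq_0_iff sq_plus_mult_plus_sq_eq_0_iff)
    then show ?thesis
      using \<open>poly a (of_nat n) = of_int x\<close> \<open>poly b (of_nat n) = of_int y\<close> by simp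
  qed
  then have "a = 0" "b = 0"
    using ab int_coeffs_vanishing_on_Nats by blast+
  then show ?thesis
    by (simp add: ab(3))
qed

definition eisenstein_polymat :: "(complex \<Rightarrow> complex^2^2) \<Rightarrow> bool" where
  "eisenstein_polymat M \<longleftrightarrow> (\<forall>i j. eisenstein_polyfun (\<lambda>q. M q $ i $ j))"

lemma eisenstein_polymat_iff:
  "eisenstein_polymat M \<longleftrightarrow>
     eisenstein_polyfun (\<lambda>q. M q $ 1 $ 1) \<and> eisenstein_polyfun (\<lambda>q. M q $ 1 $ 2) \<and>
     eisenstein_polyfun (\<lambda>q. M q $ 2 $ 1) \<and> eisenstein_polyfun (\<lambda>q. M q $ 2 $ 2)"
  unfolding eisenstein_polymat_def by (simp add: forall_2)

lemma eisenstein_polymat_mult: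
  "eisenstein_polymat A \<Longrightarrow> eisenstein_polymat B \<Longrightarrow> eisenstein_polymat (\<lambda>q. A q ** B q)"
  unfolding eisenstein_polymat_iff
  by (simp add: matrix_matrix_mult_def sum_2 eisenstein_polyfun_intros)

lemma eisenstein_polymat_adj2: "eisenstein_polymat A \<Longrightarrow> eisenstein_polymat (\<lambda>q. adj2 (A q))"
  unfolding eisenstein_polymat_iff adj2_def by (simp add: eisenstein_polyfun_intros)

lemma eisenstein_polymat_letterC: "eisenstein_polymat (\<lambda>q. letterC \<psi> q l)"
proof -
  have "eisenstein_polymat (\<lambda>q. genC \<psi> q g)" for g
    unfolding eisenstein_polymat_iff
    by (cases \<psi>; cases g) (simp_all add: power2_eq_square inverse_omega eisenstein_polyfun_intros)
  then show ?thesis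
    by (cases l; cases "snd l") (simp_all add: eisenstein_polymat_adj2)
qed

lemma eisenstein_polymat_evalC: "eisenstein_polymat (\<lambda>q. evalC \<psi> q w)"
proof (induction w)
  case Nil
  show ?case
    unfolding eisenstein_polymat_iff by (simp add: evalC_def mat_def eisenstein_polyfun_intros)
next
  case (Cons l w)
  then show ?case
    unfolding evalC_def by (simp add: eisenstein_polymat_mult eisenstein_polymat_letterC)
qed

lemma pglC_eq_refl: "pglC_eq A A"
  unfolding pglC_eq_def by (intro exI[of _ 1]) (simp add: vec_eq_iff)

lemma pglC_eq_sym:
  assumes "pglC_eq A B"
  shows "pglC_eq B A"
proof -
  obtain c where "c \<noteq> 0" "A = (\<chi> i j. c * B $ i $ j)"
    using assms unfolding pglC_eq_def by blast
  then show ?thesis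
    unfolding pglC_eq_def by (intro exI[of _ "1 / c"]) (simp add: vec_eq_iff)
qed

lemma pglC_eq_mult:
  assumes "pglC_eq A A'" "pglC_eq B B'"
  shows "pglC_eq (A ** B) (A' ** B')"
proof -
  obtain c d where "c \<noteq> 0" "A = (\<chi> i j. c * A' $ i $ j)" "d \<noteq> 0" "B = (\<chi> i j. d * B' $ i $ j)"
    using assms unfolding pglC_eq_def by blast
  then show ?thesis
    unfolding pglC_eq_def
    by (intro exI[of _ "c * d"]) (simp add: vec_eq_iff matrix_matrix_mult_def sum_2 algebra_simps)
qed

lemma pglC_eq_trans:
  assumes "pglC_eq A B" "pglC_eq B C"
  shows "pglC_eq A C"
proof -
  obtain c d where "c \<noteq> 0" "A = (\<chi> i j. c * B $ i $ j)" "d \<noteq> 0" "B = (\<chi> i j. d * C $ i $ j)"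
    using assms unfolding pglC_eq_def by blast
  then show ?thesis
    unfolding pglC_eq_def by (intro exI[of _ "c * d"]) (simp add: vec_eq_iff)
qed

lemma pglC_eq_minors:
  "pglC_eq A B \<Longrightarrow> A $ i $ j * B $ k $ l = A $ k $ l * B $ i $ j"
  unfolding pglC_eq_def by auto

lemma pglC_eq_if_minors:
  assumes "A \<noteq> 0" "B \<noteq> 0" "\<And>i j k l. A $ i $ j * B $ k $ l = A $ k $ l * B $ i $ j"
  shows "pglC_eq A B"
proof -
  obtain k l where kl: "B $ k $ l \<noteq> 0"
    using assms(2) by (auto simp: vec_eq_iff)
  have entry: "A $ i $ j = A $ k $ l * B $ i $ j / B $ k $ l" for i j
    using assms(3)[of i j k l] kl by (simp add: field_simps)
  have "A $ k $ l \<noteq> 0"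
  proof
    assume "A $ k $ l = 0"
    then have "A $ i $ j = 0" for i j
      using entry[of i j] by simp
    with assms(1) show False
      by (simp add: vec_eq_iff)
  qed
  with kl show ?thesis
    unfolding pglC_eq_def
    by (intro exI[of _ "A $ k $ l / B $ k $ l"]) (simp add: vec_eq_iff, intro allI entry)
qed

lemma pglC_eq_evalC_specialize:
  assumes "\<not> algebraic r" "pglC_eq (evalC \<psi> r w1) (evalC \<psi> r w2)"
    and "evalC \<psi> q w1 \<noteq> 0" "evalC \<psi> q w2 \<noteq> 0"
  shows "pglC_eq (evalC \<psi> q w1) (evalC \<psi> q w2)"
proof (rule pglC_eq_if_minors[OF assms(3,4)])
  fix i j k l
  let ?minor = "\<lambda>q. evalC \<psi> q w1 $ i $ j * evalC \<psi> q w2 $ k $ l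
                    - evalC \<psi> q w1 $ k $ l * evalC \<psi> q w2 $ i $ j"
  have "eisenstein_polyfun ?minor"
    using eisenstein_polymat_evalC unfolding eisenstein_polymat_def
    by (intro eisenstein_polyfun_intros) auto
  moreover have "?minor r = 0"
    using pglC_eq_minors[OF assms(2), of i j k l] by simp
  ultimately have "?minor q = 0"
    by (rule eisenstein_polyfun_transcendental_root[OF assms(1)])
  then show "evalC \<psi> q w1 $ i $ j * evalC \<psi> q w2 $ k $ l
              = evalC \<psi> q w1 $ k $ l * evalC \<psi> q w2 $ i $ j"
    by simp
qed

definition translation :: "complex \<Rightarrow> complex^2^2" where
  "translation t = mat2 1 t 0 1"

lemma translation_mult: "translation s ** translation t = translation (s + t)"
  by (simp add: translation_def mat2_mult add.commute)

lemma translation_mult_right: "M ** translation s ** translation t = M ** translation (s + t)"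
  by (simp add: translation_mult flip: matrix_mul_assoc)

lemma translation_0: "translation 0 = mat 1"
  by (simp add: translation_def mat_1_eq_mat2)

definition conj_translation :: "complex \<Rightarrow> complex^2^2 \<Rightarrow> complex^2^2" where
  "conj_translation t M = translation t ** M ** translation (- t)"

lemma conj_translation_mult:
  "conj_translation t (A ** B) = conj_translation t A ** conj_translation t B"
  by (simp add: conj_translation_def matrix_mul_assoc translation_mult_right translation_0)

lemma conj_translation_mat_1: "conj_translation t (mat 1) = mat 1"
  by (simp add: conj_translation_def translation_mult translation_0)

lemma conj_translation_cancel: "conj_translation (- t) (conj_translation t M) = M"
  by (simp add: conj_translation_def matrix_mul_assoc translation_mult translation_mult_right
      translation_0)

lemma pglC_eq_conj_translation:
  "pglC_eq A B \<Longrightarrow> pglC_eq (conj_translation t A) (conj_translation t B)"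
  by (simp add: conj_translation_def pglC_eq_mult pglC_eq_refl)

lemma map_matrix_of_int_mult:
  "map_matrix of_int (A ** B) = (map_matrix of_int A ** map_matrix of_int B :: 'a::comm_ring_1^'n^'m)"
  by (simp add: vec_eq_iff matrix_matrix_mult_def)

lemma map_matrix_of_int_mat_1: "map_matrix of_int (mat 1) = (mat 1 :: 'a::ring_1^'n^'n)"
  by (simp add: vec_eq_iff mat_def)

lemma map_matrix_mat2: "map_matrix f (mat2 a b c d) = mat2 (f a) (f b) (f c) (f d)"
  unfolding mat2_def by (simp add: vec_eq_iff forall_2)

text \<open>At \<open>q = 1\<close> each representation is the standard action on \<open>\<complex>\<close> conjugated by the
  translation \<open>x \<mapsto> x + conj_shift \<psi>\<close>, letter by letter up to the scalar \<open>letter_scale\<close>.\<close>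
fun conj_shift :: "rep \<Rightarrow> complex" where
  "conj_shift Psi = 0"
| "conj_shift PsiPlus = - omega"
| "conj_shift PsiMinus = omega - 1"

fun letter_scale :: "rep \<Rightarrow> gen \<Rightarrow> bool \<Rightarrow> complex" where
  "letter_scale _ GT _ = 1"
| "letter_scale Psi GS _ = 1"
| "letter_scale Psi GV b = (if b then -1 else 1)"
| "letter_scale PsiPlus GS _ = omega - 1"
| "letter_scale PsiPlus GV b = (if b then omega - 1 else 1 - omega)"
| "letter_scale PsiMinus GS _ = - omega"
| "letter_scale PsiMinus GV b = (if b then - omega else omega)"

lemma letter_scale_neq_0: "letter_scale \<psi> g b \<noteq> 0"
  using omega_neq_0 omega_neq_1 by (cases \<psi>; cases g; cases b) auto

lemma letterC_at_1:
  "letterC \<psi> 1 (g, b)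
     = (\<chi> i j. letter_scale \<psi> g b *
          conj_translation (conj_shift \<psi>) (map_matrix of_int (genZ (g, b))) $ i $ j)"
proof -
  have omega_cubed: "omega * (omega * x) = omega * x - x" for x
    by (metis omega_squared mult.assoc left_diff_distrib mult_1)
  show ?thesis
    by (cases \<psi>; cases g; cases b) (simp_all add: conj_translation_def translation_def
      map_matrix_mat2 mat2_mult adj2_def vec_eq_iff forall_2 inverse_omega omega_squared
      omega_cubed algebra_simps)
qed

lemma evalC_at_1:
  "pglC_eq (evalC \<psi> 1 w) (conj_translation (conj_shift \<psi>) (map_matrix of_int (evalZ w)))"
proof (induction w)
  case Nil
  show ?case
    by (simp add: evalC_def evalZ_def map_matrix_of_int_mat_1 conj_translation_mat_1 pglC_eq_refl)
next
  case (Cons l w)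
  obtain g b where "l = (g, b)"
    by (cases l)
  then have "pglC_eq (letterC \<psi> 1 l) (conj_translation (conj_shift \<psi>) (map_matrix of_int (genZ l)))"
    unfolding pglC_eq_def using letterC_at_1 letter_scale_neq_0 by blast
  with Cons.IH show ?case
    by (simp add: evalC_def evalZ_def map_matrix_of_int_mult conj_translation_mult pglC_eq_mult)
qed

lemma abs_det_evalZ: "\<bar>det (evalZ w)\<bar> = 1"
proof (induction w)
  case Nil
  show ?case
    by (simp add: evalZ_def)
next
  case (Cons l w)
  have "\<bar>det (genZ l)\<bar> = 1"
    by (cases l rule: genZ.cases) (simp_all add: det_2)
  with Cons.IH show ?case
    by (simp add: evalZ_def det_mul abs_mult)
qed

lemma pglZ_eq_if_pglC_eq:
  assumes "pglC_eq (map_matrix of_int Z1) (map_matrix of_int Z2)"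
    and "\<bar>det Z1\<bar> = 1" "\<bar>det Z2\<bar> = 1"
  shows "pglZ_eq Z1 Z2"
proof -
  obtain c where "map_matrix of_int Z1 = (\<chi> i j. c * (map_matrix of_int Z2 :: complex^2^2) $ i $ j)"
    using assms(1) unfolding pglC_eq_def by blast
  then have c: "of_int (Z1 $ i $ j) = c * of_int (Z2 $ i $ j)" for i j
    by (simp add: vec_eq_iff)
  have "of_int (det Z1) = c^2 * of_int (det Z2)"
    by (simp add: det_2 c power2_eq_square algebra_simps)
  then have "of_int (det Z1 * det Z2) = c^2 * of_int (det Z2 * det Z2)"
    by (simp add: mult.assoc)
  moreover have "det Z2 * det Z2 = 1"
    using assms(3) abs_mult_self_eq[of "det Z2"] by simp
  ultimately have c2: "c^2 = of_int (det Z1 * det Z2)"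
    by simp
  have "\<not> (\<forall>i j. Z2 $ i $ j = 0)"
  proof
    assume "\<forall>i j. Z2 $ i $ j = 0"
    then have "det Z2 = 0"
      by (simp add: det_2)
    with assms(3) show False
      by simp
  qed
  then obtain i j where "Z2 $ i $ j \<noteq> 0"
    by blast
  then have "c = of_int (Z1 $ i $ j) / of_int (Z2 $ i $ j)"
    using c[of i j] by (simp add: eq_divide_eq)
  then have "c \<in> \<real>"
    by simp
  then obtain x where x: "c = of_real x"
    by (auto elim: Reals_cases)
  with c2 have x2: "x^2 = of_int (det Z1 * det Z2)"
    by (metis of_real_eq_iff of_real_of_int_eq of_real_power)
  have "det Z1 * det Z2 = 1 \<or> det Z1 * det Z2 = -1"
    using assms(2,3) by (auto simp: abs_eq_iff')
  then have "x^2 = 1"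
    using x2 zero_le_power2[of x] by (auto simp del: of_int_mult)
  then have "c = 1 \<or> c = -1"
    using x by (auto simp: power2_eq_1_iff)
  then show ?thesis
  proof
    assume "c = 1"
    then have "Z1 $ i $ j = Z2 $ i $ j" for i j
      using c[of i j] by simp
    then show ?thesis
      unfolding pglZ_eq_def by (simp add: vec_eq_iff)
  next
    assume "c = -1"
    then have "of_int (Z1 $ i $ j) = (of_int (- Z2 $ i $ j) :: complex)" for i j
      using c[of i j] by simp
    then have "Z1 $ i $ j = - Z2 $ i $ j" for i j
      by (simp only: of_int_eq_iff)
    then show ?thesis
      unfolding pglZ_eq_def by (simp add: vec_eq_iff)
  qed
qed

lemma evalC_at_1_neq_0: "evalC \<psi> 1 w \<noteq> 0"
proof
  assume "evalC \<psi> 1 w = 0"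
  with evalC_at_1[of \<psi> w]
  have "conj_translation (conj_shift \<psi>) (map_matrix of_int (evalZ w)) = 0"
    unfolding pglC_eq_def by (auto simp: vec_eq_iff)
  then have "map_matrix of_int (evalZ w) = conj_translation (- conj_shift \<psi>) (0 :: complex^2^2)"
    by (metis conj_translation_cancel)
  then have "map_matrix of_int (evalZ w) = (0 :: complex^2^2)"
    by (simp add: conj_translation_def matrix_matrix_mult_def vec_eq_iff)
  then have "det (evalZ w) = 0"
    by (simp add: det_2 vec_eq_iff)
  with abs_det_evalZ[of w] show False
    by simp
qed

theorem mainTheorem7:
  fixes r :: complex
  assumes "\<not> algebraic r"
  shows "\<forall>\<psi> w1 w2. pglC_eq (evalC \<psi> r w1) (evalC \<psi> r w2) \<longrightarrow> pglZ_eq (evalZ w1) (evalZ w2)"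
proof (intro allI impI)
  fix \<psi> w1 w2
  let ?t = "conj_shift \<psi>"
  assume "pglC_eq (evalC \<psi> r w1) (evalC \<psi> r w2)"
  then have "pglC_eq (evalC \<psi> 1 w1) (evalC \<psi> 1 w2)"
    by (rule pglC_eq_evalC_specialize[OF assms _ evalC_at_1_neq_0 evalC_at_1_neq_0])
  then have "pglC_eq (conj_translation ?t (map_matrix of_int (evalZ w1)))
                     (conj_translation ?t (map_matrix of_int (evalZ w2)))"
    by (rule pglC_eq_trans[OF pglC_eq_trans[OF pglC_eq_sym[OF evalC_at_1]] evalC_at_1])
  then have "pglC_eq (map_matrix of_int (evalZ w1)) (map_matrix of_int (evalZ w2))"
    by (metis pglC_eq_conj_translation conj_translation_cancel)
  then show "pglZ_eq (evalZ w1) (evalZ w2)"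
    using pglZ_eq_if_pglC_eq abs_det_evalZ by blast
qed

end
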